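(* Let $s\in[-\infty,0]$, let $\rho,\rho'$ be $2\times2$ density matrices with $\mathrm{Tr}[\rho^2]=\mathrm{Tr}[\rho'^2]$, and let $X,X'$ be nonzero $2\times 2$ Hermitian matrices with $[\rho',X']\neq 0$. Let $\{|\psi_1\rangle,|\psi_2\rangle\}$ and $\{|\psi'_1\rangle,|\psi'_2\rangle\}$ be orthonormal eigenbases of $\rho$ and $\rho'$ respectively, with eigenvalues in descending order. Then $I^s(\rho,X)=\eta\, I^s(\rho',X')$, where $\eta=\dfrac{|\langle\psi_1|X|\psi_2\rangle|^2}{|\langle\psi'_1|X'|\psi'_2\rangle|^2}$.
   Context: For a density matrix $\rho=\sum_{i}\lambda_i|\psi_i\rangle\langle\psi_i|$ on $\mathbb{C}^d$ (orthonormal eigenbasis, $\lambda_1\ge\cdots\ge\lambda_d\ge0$): for $-\infty<s<0$ and $a_1,a_2>0$ let $m_s(a_1,a_2)=\left(\frac{a_1^s+a_2^s}{2}\right)^{1/s}$; $m_0(a_1,a_2)=\sqrt{a_1a_2}$; $m_{-\infty}(a_1,a_2)=\min\{a_1,a_2\}$; and $m_s(a,0)=m_s(0,a)=m_s(0,0)=0$. Define $\zeta_\rho^s(X,Y)=\mathrm{Tr}[\rho X^\dagger Y]-\sum_{i,j} m_s(\lambda_i,\lambda_j)\langle\psi_i|X^\dagger|\psi_j\rangle\langle\psi_j|Y|\psi_i\rangle$ and $I^s(\rho,X)=\zeta_\rho^s(X,X)$. *)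

theory Defs
  imports "HOL-Analysis.Analysis"
begin

type_synonym cmat2 = "complex ^ 2 ^ 2"
type_synonym cvec2 = "complex ^ 2"

definition adj :: "cmat2 \<Rightarrow> cmat2" where
  "adj A = (\<chi> i j. cnj (A $ j $ i))"

definition tr :: "cmat2 \<Rightarrow> complex" where
  "tr A = (\<Sum>i\<in>UNIV. A $ i $ i)"

definition braket :: "cvec2 \<Rightarrow> cvec2 \<Rightarrow> complex" where
  "braket u v = (\<Sum>k\<in>UNIV. cnj (u $ k) * v $ k)"

definition hermitian :: "cmat2 \<Rightarrow> bool" where
  "hermitian A \<longleftrightarrow> adj A = A"

definition density_matrix :: "cmat2 \<Rightarrow> bool" where
  "density_matrix \<rho> \<longleftrightarrow> hermitian \<rho> \<and> (\<forall>v. Re (braket v (\<rho> *v v)) \<ge> 0) \<and> tr \<rho> = 1"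

definition ordered_eigenbasis :: "cmat2 \<Rightarrow> (nat \<Rightarrow> real) \<Rightarrow> (nat \<Rightarrow> cvec2) \<Rightarrow> bool" where
  "ordered_eigenbasis \<rho> lam psi \<longleftrightarrow>
     (\<forall>i\<in>{1,2}. \<forall>j\<in>{1,2}. braket (psi i) (psi j) = (if i = j then 1 else 0)) \<and>
     (\<forall>i\<in>{1,2}. \<rho> *v psi i = complex_of_real (lam i) *s psi i) \<and>
     lam 1 \<ge> lam 2"

definition mean_s :: "ereal \<Rightarrow> real \<Rightarrow> real \<Rightarrow> real" where
  "mean_s s a1 a2 =
     (if a1 = 0 \<or> a2 = 0 then 0
      else if s = -\<infinity> then min a1 a2
      else if s = 0 then sqrt (a1 * a2)
      else ((a1 powr real_of_ereal s + a2 powr real_of_ereal s) / 2) powr (1 / real_of_ereal s))"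

definition zeta_s :: "ereal \<Rightarrow> cmat2 \<Rightarrow> (nat \<Rightarrow> real) \<Rightarrow> (nat \<Rightarrow> cvec2) \<Rightarrow> cmat2 \<Rightarrow> cmat2 \<Rightarrow> complex" where
  "zeta_s s \<rho> lam psi X Y =
     tr (\<rho> ** adj X ** Y)
     - (\<Sum>i\<in>{1::nat,2}. \<Sum>j\<in>{1::nat,2}.
          complex_of_real (mean_s s (lam i) (lam j))
          * braket (psi i) (adj X *v psi j) * braket (psi j) (Y *v psi i))"

definition I_s :: "ereal \<Rightarrow> cmat2 \<Rightarrow> (nat \<Rightarrow> real) \<Rightarrow> (nat \<Rightarrow> cvec2) \<Rightarrow> cmat2 \<Rightarrow> complex" where
  "I_s s \<rho> lam psi X = zeta_s s \<rho> lam psi X X"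

end

theory Submission imports Defs begin

text \<open>In an orthonormal eigenbasis of \<rho>, the terms i = j of I^s cancel because m_s(a, a) = a,
  and Hermiticity of X gives the two remaining terms the same weight, so
  I^s(\<rho>, X) = (\<lambda>_1 + \<lambda>_2 - 2 m_s(\<lambda>_1, \<lambda>_2)) |<\<psi>_1|X|\<psi>_2>|^2.
  For a qubit state the ordered spectrum is fixed by Tr \<rho> = 1 and Tr \<rho>^2, so \<rho> and \<rho>' have the same
  prefactor; and [\<rho>', X'] \<noteq> 0 forces <\<psi>'_1|X'|\<psi>'_2> \<noteq> 0, since otherwise the
  eigenbasis of \<rho>' would diagonalise X' too.\<close>

lemma adj_adj [simp]: "adj (adj A) = A"
  unfolding adj_def by (simp add: vec_eq_iff)

lemma braket_adj_right: "braket u (A *v w) = braket (adj A *v u) w"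
  unfolding braket_def adj_def matrix_vector_mult_def
  by (simp add: sum_2 algebra_simps)

lemma braket_swap: "braket v u = cnj (braket u v)"
  unfolding braket_def by (simp add: sum_2 mult.commute)

lemma braket_add_right: "braket u (x + y) = braket u x + braket u y"
  unfolding braket_def by (simp add: sum_2 algebra_simps)

lemma braket_scale_right: "braket u (c *s x) = c * braket u x"
  unfolding braket_def by (simp add: sum_2 algebra_simps)

lemma braket_scale_left: "braket (c *s x) y = cnj c * braket x y"
  unfolding braket_def by (simp add: sum_2 algebra_simps)

lemma hermitian_braket_swap:
  assumes "hermitian X"
  shows "braket u (X *v v) = cnj (braket v (X *v u))"
  using assms braket_adj_right braket_swap unfolding hermitian_def by metis

lemma braket_adj_times_braket:
  "braket u (adj X *v v) * braket v (X *v u) = complex_of_real ((cmod (braket v (X *v u)))\<^sup>2)"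
  by (metis adj_adj braket_adj_right braket_swap complex_norm_square mult.commute)

lemma braket_eigenvector:
  assumes "braket u u = 1" and "A *v u = c *s u"
  shows "braket u (A *v u) = c"
  using assms by (simp add: braket_scale_right)

definition orthonormal_pair :: "cvec2 \<Rightarrow> cvec2 \<Rightarrow> bool" where
  "orthonormal_pair u v \<longleftrightarrow> braket u u = 1 \<and> braket v v = 1 \<and> braket u v = 0"

text \<open>The matrix with rows cnj u, cnj v is a left, hence also a right, inverse of the one
  with columns u, v.\<close>
lemma orthonormal_pair_completeness:
  assumes "orthonormal_pair u v"
  shows "u $ a * cnj (u $ b) + v $ a * cnj (v $ b) = (if a = b then 1 else 0)"
proof -
  have vu: "braket v u = 0"
    using assms braket_swap unfolding orthonormal_pair_def by (metis complex_cnj_zero)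
  define B :: cmat2 where "B = (\<chi> i k. cnj ((if i = 1 then u else v) $ k))"
  define C :: cmat2 where "C = (\<chi> k j. (if j = 1 then u else v) $ k)"
  have "B ** C = mat 1"
    using assms vu unfolding orthonormal_pair_def B_def C_def matrix_matrix_mult_def mat_def braket_def
    by (simp add: vec_eq_iff forall_2 sum_2)
  then have "C ** B = mat 1"
    using matrix_left_right_inverse by blast
  then have "(C ** B) $ a $ b = mat 1 $ a $ b"
    by simp
  then show ?thesis
    unfolding B_def C_def matrix_matrix_mult_def mat_def by (simp add: sum_2)
qed

lemma orthonormal_pair_expansion:
  assumes "orthonormal_pair u v"
  shows "w = braket u w *s u + braket v w *s v"
proof -
  have "(braket u w *s u + braket v w *s v) $ a = w $ a" for a
  proof -
    have "(braket u w *s u + braket v w *s v) $ a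
        = (\<Sum>b\<in>UNIV. w $ b * (u $ a * cnj (u $ b) + v $ a * cnj (v $ b)))"
      unfolding braket_def by (simp add: sum_2 algebra_simps)
    also have "\<dots> = w $ a"
      using exhaust_2[of a] by (auto simp: orthonormal_pair_completeness[OF assms] sum_2)
    finally show ?thesis .
  qed
  then show ?thesis
    by (simp add: vec_eq_iff)
qed

lemma orthonormal_pair_parseval:
  assumes "orthonormal_pair u v"
  shows "braket w w = complex_of_real ((cmod (braket u w))\<^sup>2 + (cmod (braket v w))\<^sup>2)"
proof -
  have "braket w w = braket w (braket u w *s u + braket v w *s v)"
    using orthonormal_pair_expansion[OF assms] by metis
  also have "\<dots> = braket u w * cnj (braket u w) + braket v w * cnj (braket v w)"
    by (simp add: braket_add_right braket_scale_right braket_swap[of w u] braket_swap[of w v])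
  also have "\<dots> = complex_of_real ((cmod (braket u w))\<^sup>2 + (cmod (braket v w))\<^sup>2)"
    by (simp only: of_real_add complex_norm_square)
  finally show ?thesis .
qed

lemma tr_orthonormal_pair:
  assumes "orthonormal_pair u v"
  shows "tr A = braket u (A *v u) + braket v (A *v v)"
proof -
  have "braket u (A *v u) + braket v (A *v v)
      = (\<Sum>a\<in>UNIV. \<Sum>b\<in>UNIV. A $ a $ b * (u $ b * cnj (u $ a) + v $ b * cnj (v $ a)))"
    unfolding braket_def matrix_vector_mult_def by (simp add: sum_2 algebra_simps)
  also have "\<dots> = tr A"
    unfolding tr_def by (simp add: orthonormal_pair_completeness[OF assms] sum_2)
  finally show ?thesis by simp
qed

lemma matrix_eq_orthonormal_pair:
  assumes "orthonormal_pair u v" and "M *v u = N *v u" and "M *v v = N *v v"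
  shows "M = N"
proof (subst matrix_eq, intro allI)
  fix w
  have "M *v w = M *v (braket u w *s u + braket v w *s v)"
    using orthonormal_pair_expansion[OF assms(1)] by metis
  also have "\<dots> = N *v (braket u w *s u + braket v w *s v)"
    by (simp add: matrix_vector_right_distrib vector_scalar_commute assms(2,3))
  also have "\<dots> = N *v w"
    using orthonormal_pair_expansion[OF assms(1)] by metis
  finally show "M *v w = N *v w" .
qed

lemma ordered_eigenbasis_orthonormal:
  "ordered_eigenbasis \<rho> lam psi \<Longrightarrow> orthonormal_pair (psi 1) (psi 2)"
  unfolding ordered_eigenbasis_def orthonormal_pair_def by auto

lemma ordered_eigenbasisD:
  assumes "ordered_eigenbasis \<rho> lam psi" and "i \<in> {1, 2}"
  shows "braket (psi i) (psi i) = 1" and "\<rho> *v psi i = complex_of_real (lam i) *s psi i"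
  using assms unfolding ordered_eigenbasis_def by auto

lemma density_matrix_eigenvalue_nonneg:
  assumes "density_matrix \<rho>" and "braket u u = 1" and "\<rho> *v u = complex_of_real l *s u"
  shows "l \<ge> 0"
proof -
  have "Re (braket u (\<rho> *v u)) \<ge> 0"
    using assms(1) unfolding density_matrix_def by blast
  then show ?thesis
    using braket_eigenvector[OF assms(2,3)] by simp
qed

lemma tr_ordered_eigenbasis:
  assumes "ordered_eigenbasis \<rho> lam psi"
  shows "tr \<rho> = complex_of_real (lam 1 + lam 2)"
    and "tr (\<rho> ** \<rho>) = complex_of_real ((lam 1)\<^sup>2 + (lam 2)\<^sup>2)"
proof -
  note norm = ordered_eigenbasisD(1)[OF assms] and eig = ordered_eigenbasisD(2)[OF assms]
  have eig_sq: "(\<rho> ** \<rho>) *v psi i = complex_of_real ((lam i)\<^sup>2) *s psi i" if "i \<in> {1, 2}" for i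
    using eig[OF that]
    by (simp add: matrix_vector_mul_assoc[symmetric] vector_scalar_commute power2_eq_square)
  note tr_pair = tr_orthonormal_pair[OF ordered_eigenbasis_orthonormal[OF assms]]
  show "tr \<rho> = complex_of_real (lam 1 + lam 2)"
    by (simp add: tr_pair braket_eigenvector[OF norm eig])
  show "tr (\<rho> ** \<rho>) = complex_of_real ((lam 1)\<^sup>2 + (lam 2)\<^sup>2)"
    by (simp add: tr_pair braket_eigenvector[OF norm eig_sq])
qed

lemma eigenvalues_eq_if_purity_eq:
  assumes "density_matrix \<rho>" and "density_matrix \<rho>'"
    and "ordered_eigenbasis \<rho> lam psi" and "ordered_eigenbasis \<rho>' lam' psi'"
    and "tr (\<rho> ** \<rho>) = tr (\<rho>' ** \<rho>')"
  shows "lam 1 = lam' 1" and "lam 2 = lam' 2"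
proof -
  have "tr \<rho> = 1" and "tr \<rho>' = 1"
    using assms(1,2) unfolding density_matrix_def by blast+
  then have sum: "lam 1 + lam 2 = 1" "lam' 1 + lam' 2 = 1"
    using tr_ordered_eigenbasis(1)[OF assms(3)] tr_ordered_eigenbasis(1)[OF assms(4)]
    by (metis of_real_eq_1_iff)+
  have squares: "(lam 1)\<^sup>2 + (lam 2)\<^sup>2 = (lam' 1)\<^sup>2 + (lam' 2)\<^sup>2"
    using assms(5) tr_ordered_eigenbasis(2)[OF assms(3)] tr_ordered_eigenbasis(2)[OF assms(4)]
    by (metis of_real_eq_iff)
  have "(lam 1 - lam 2)\<^sup>2 = 2 * ((lam 1)\<^sup>2 + (lam 2)\<^sup>2) - (lam 1 + lam 2)\<^sup>2"
    by (simp add: power2_eq_square algebra_simps)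
  also have "\<dots> = 2 * ((lam' 1)\<^sup>2 + (lam' 2)\<^sup>2) - (lam' 1 + lam' 2)\<^sup>2"
    using squares sum by simp
  also have "\<dots> = (lam' 1 - lam' 2)\<^sup>2"
    by (simp add: power2_eq_square algebra_simps)
  finally have "lam 1 - lam 2 = lam' 1 - lam' 2"
    using assms(3,4) unfolding ordered_eigenbasis_def by (simp add: power2_eq_iff_nonneg)
  with sum show "lam 1 = lam' 1" and "lam 2 = lam' 2"
    by linarith+
qed

lemma mean_s_commute: "mean_s s a b = mean_s s b a"
  unfolding mean_s_def by (simp add: min.commute mult.commute add.commute)

lemma mean_s_same:
  assumes "s \<le> 0" and "a \<ge> 0"
  shows "mean_s s a a = a"
proof -
  consider "a = 0" | "a > 0" "s = -\<infinity>" | "a > 0" "s = 0" | r where "a > 0" "s = ereal r" "r \<noteq> 0"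
    using assms by (cases s) force+
  then show ?thesis
  proof cases
    case (4 r)
    then have "((a powr r + a powr r) / 2) powr (1 / r) = a"
      by (simp add: powr_powr)
    with 4 show ?thesis
      unfolding mean_s_def by simp
  qed (auto simp: mean_s_def)
qed

lemma I_s_ordered_eigenbasis:
  assumes "hermitian \<rho>" and "ordered_eigenbasis \<rho> lam psi"
  shows "I_s s \<rho> lam psi X = complex_of_real
    (\<Sum>i\<in>{1::nat, 2}. \<Sum>j\<in>{1::nat, 2}.
       (lam i - mean_s s (lam i) (lam j)) * (cmod (braket (psi j) (X *v psi i)))\<^sup>2)"
proof -
  note pair = ordered_eigenbasis_orthonormal[OF assms(2)]
  note eig = ordered_eigenbasisD(2)[OF assms(2)]
  have diag: "braket (psi i) ((\<rho> ** adj X ** X) *v psi i) = complex_of_real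
      (\<Sum>j\<in>{1::nat, 2}. lam i * (cmod (braket (psi j) (X *v psi i)))\<^sup>2)"
    if "i \<in> {1, 2}" for i
  proof -
    have "braket (psi i) ((\<rho> ** adj X ** X) *v psi i) = braket (\<rho> *v psi i) (adj X *v (X *v psi i))"
      using assms(1) unfolding hermitian_def
      by (simp add: matrix_vector_mul_assoc[symmetric] braket_adj_right)
    also have "\<dots> = complex_of_real (lam i) * braket (psi i) (adj X *v (X *v psi i))"
      by (simp add: eig[OF that] braket_scale_left)
    also have "braket (psi i) (adj X *v (X *v psi i)) = braket (X *v psi i) (X *v psi i)"
      by (metis adj_adj braket_adj_right)
    finally show ?thesis
      by (simp add: orthonormal_pair_parseval[OF pair] distrib_left)
  qed
  have "tr (\<rho> ** adj X ** X) = (\<Sum>i\<in>{1::nat, 2}. braket (psi i) ((\<rho> ** adj X ** X) *v psi i))"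
    by (simp add: tr_orthonormal_pair[OF pair])
  then show ?thesis
    unfolding I_s_def zeta_s_def
    by (simp add: diag braket_adj_times_braket sum_subtractf left_diff_distrib mult.assoc)
qed

lemma I_s_off_diagonal:
  assumes "s \<le> 0" and "density_matrix \<rho>" and "hermitian X" and "ordered_eigenbasis \<rho> lam psi"
  shows "I_s s \<rho> lam psi X = complex_of_real
    ((lam 1 + lam 2 - 2 * mean_s s (lam 1) (lam 2)) * (cmod (braket (psi 1) (X *v psi 2)))\<^sup>2)"
proof -
  have "lam i \<ge> 0" if "i \<in> {1, 2}" for i
    using density_matrix_eigenvalue_nonneg[OF assms(2) ordered_eigenbasisD[OF assms(4) that]] .
  then have "mean_s s (lam i) (lam i) = lam i" if "i \<in> {1, 2}" for i
    using mean_s_same[OF assms(1)] that by blast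
  moreover have "cmod (braket (psi 2) (X *v psi 1)) = cmod (braket (psi 1) (X *v psi 2))"
    using hermitian_braket_swap[OF assms(3), of "psi 2" "psi 1"] by simp
  moreover have "mean_s s (lam 2) (lam 1) = mean_s s (lam 1) (lam 2)"
    by (rule mean_s_commute)
  moreover have "hermitian \<rho>"
    using assms(2) unfolding density_matrix_def by blast
  ultimately show ?thesis
    using assms(4) by (simp add: I_s_ordered_eigenbasis algebra_simps)
qed

lemma commute_on_common_eigenvector:
  fixes A B :: "'a::field ^ 'n ^ 'n"
  assumes "A *v u = a *s u" and "B *v u = b *s u"
  shows "(A ** B) *v u = (B ** A) *v u"
  using assms
  by (simp add: matrix_vector_mul_assoc[symmetric] vector_scalar_commute vector_smult_assoc mult.commute)

lemma commute_if_off_diagonal_zero: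
  assumes "hermitian X" and "ordered_eigenbasis \<rho> lam psi"
    and "braket (psi 1) (X *v psi 2) = 0"
  shows "\<rho> ** X = X ** \<rho>"
proof -
  note pair = ordered_eigenbasis_orthonormal[OF assms(2)]
  have "braket (psi 2) (X *v psi 1) = 0"
    using assms(3) hermitian_braket_swap[OF assms(1), of "psi 2" "psi 1"] by simp
  then have "X *v psi 1 = braket (psi 1) (X *v psi 1) *s psi 1"
    and "X *v psi 2 = braket (psi 2) (X *v psi 2) *s psi 2"
    using orthonormal_pair_expansion[OF pair, of "X *v psi 1"]
      orthonormal_pair_expansion[OF pair, of "X *v psi 2"] assms(3) by simp_all
  then show ?thesis
    using ordered_eigenbasisD(2)[OF assms(2)]
    by (intro matrix_eq_orthonormal_pair[OF pair] commute_on_common_eigenvector) auto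
qed

theorem theorem3:
  fixes s :: ereal and \<rho> \<rho>' X X' :: cmat2
    and lam lam' :: "nat \<Rightarrow> real" and psi psi' :: "nat \<Rightarrow> cvec2"
  assumes "s \<le> 0"
    and "density_matrix \<rho>" and "density_matrix \<rho>'"
    and "tr (\<rho> ** \<rho>) = tr (\<rho>' ** \<rho>')"
    and "hermitian X" and "X \<noteq> 0" and "hermitian X'" and "X' \<noteq> 0"
    and "\<rho>' ** X' - X' ** \<rho>' \<noteq> 0"
    and "ordered_eigenbasis \<rho> lam psi" and "ordered_eigenbasis \<rho>' lam' psi'"
  shows "I_s s \<rho> lam psi X =
     complex_of_real ((cmod (braket (psi 1) (X *v psi 2)))\<^sup>2 / (cmod (braket (psi' 1) (X' *v psi' 2)))\<^sup>2)
     * I_s s \<rho>' lam' psi' X'"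
proof -
  note same_spectrum = eigenvalues_eq_if_purity_eq[OF assms(2,3,10,11,4)]
  have "braket (psi' 1) (X' *v psi' 2) \<noteq> 0"
    using commute_if_off_diagonal_zero[OF assms(7,11)] assms(9) by auto
  then show ?thesis
    unfolding I_s_off_diagonal[OF assms(1,2,5,10)] I_s_off_diagonal[OF assms(1,3,7,11)] same_spectrum
    by (simp only: of_real_mult[symmetric]) (simp add: field_simps)
qed

end
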